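(* Let $n$ be an even integer, $Q=P^{\alpha_2}$, $w^{ss}_{\min}\in W^Q$ the element corresponding to $(\frac n2,n)$, $\xi\in X(w^{ss}_{\min})^{ss}_T(\mathcal{L}(\frac n2\omega_2))$, and $\varphi:(G_{2,n})^{ss}_T(\mathcal{L}(\frac n2\omega_2))\to T\backslash\backslash(G_{2,n})^{ss}_T(\mathcal{L}(\frac n2\omega_2))$ the GIT quotient map. If $u,v\in W^{P^{\alpha_{n/2}}}$ satisfy $\varphi(u\xi)=\varphi(v\xi)$, then $v=u$ or $v=uw_0^{S\setminus\{\alpha_{n/2}\}}$.
   Context: $G=SL(n,\mathbb{C})$, $T$ the diagonal torus, $B$ the upper triangular Borel subgroup, $W=S_n$ acting on $G/Q$ via permutation-matrix representatives (so $\varphi(u\xi)$ is independent of the representative). $G_{2,n}=G/Q$ the Grassmannian of 2-planes in $\mathbb{C}^n$, $X(u)=\overline{BuQ}/Q$ for $u\in W^Q\cong I(2,n)$. $\mathcal{L}(m\omega_2)=\mathcal{O}(m)$ for the Plücker embedding with natural $T$-linearization; $ss$ denotes $T$-semistable points; the quotient is $\mathrm{Proj}\bigoplus_dH^0(G_{2,n},\mathcal{L}(\frac n2\omega_2)^{\otimes d})^T$. $W^{P^{\alpha_{n/2}}}=\{v\in S_n:v(1)<\cdots<v(\frac n2),\ v(\frac n2+1)<\cdots<v(n)\}$, with longest element $w_0^{S\setminus\{\alpha_{n/2}\}}$: $i\mapsto\frac n2+i$, $\frac n2+i\mapsto i$. *)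

theory Defs
  imports Complex_Main "HOL-Combinatorics.Permutations"
begin

(* A 2-plane V = span{a,b} in C^n, vectors indexed by {1..n} (zero outside). *)
definition pl :: "(nat \<Rightarrow> complex) \<Rightarrow> (nat \<Rightarrow> complex) \<Rightarrow> nat \<Rightarrow> nat \<Rightarrow> complex" where
  "pl a b i j = a i * b j - a j * b i"

definition is_plane :: "nat \<Rightarrow> (nat \<Rightarrow> complex) \<Rightarrow> (nat \<Rightarrow> complex) \<Rightarrow> bool" where
  "is_plane n a b \<longleftrightarrow> (\<forall>k. k \<notin> {1..n} \<longrightarrow> a k = 0 \<and> b k = 0) \<and> (\<exists>i j. pl a b i j \<noteq> 0)"

(* Exponent data of a T-invariant Pluecker monomial in H^0(G_{2,n}, L(n/2 omega_2)^{\<otimes> d}):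
   m i j = exponent of p_{ij} (i<j); each index occurs exactly d times (weight zero). *)
definition inv_monomial :: "nat \<Rightarrow> nat \<Rightarrow> (nat \<Rightarrow> nat \<Rightarrow> nat) \<Rightarrow> bool" where
  "inv_monomial n d m \<longleftrightarrow>
     (\<forall>i j. m i j \<noteq> 0 \<longrightarrow> 1 \<le> i \<and> i < j \<and> j \<le> n) \<and>
     (\<forall>i\<in>{1..n}. (\<Sum>j\<in>{1..n}. m i j + m j i) = d)"

definition mono_val :: "nat \<Rightarrow> (nat \<Rightarrow> nat \<Rightarrow> nat) \<Rightarrow> (nat \<Rightarrow> complex) \<Rightarrow> (nat \<Rightarrow> complex) \<Rightarrow> complex" where
  "mono_val n m a b = (\<Prod>i\<in>{1..n}. \<Prod>j\<in>{1..n}. pl a b i j ^ m i j)"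

(* T-semistability w.r.t. L(n/2 omega_2): some invariant section of positive degree is nonzero *)
definition semistable :: "nat \<Rightarrow> (nat \<Rightarrow> complex) \<Rightarrow> (nat \<Rightarrow> complex) \<Rightarrow> bool" where
  "semistable n a b \<longleftrightarrow> is_plane n a b \<and>
     (\<exists>d>0. \<exists>m. inv_monomial n d m \<and> mono_val n m a b \<noteq> 0)"

(* phi(x) = phi(y) in Proj (\<Oplus>_d H^0(...)^T): the evaluations of invariants of each degree
   are proportional *)
definition same_quot :: "nat \<Rightarrow> (nat \<Rightarrow> complex) \<Rightarrow> (nat \<Rightarrow> complex) \<Rightarrow>
    (nat \<Rightarrow> complex) \<Rightarrow> (nat \<Rightarrow> complex) \<Rightarrow> bool" where
  "same_quot n a b a' b' \<longleftrightarrow>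
     (\<forall>d m m'. inv_monomial n d m \<longrightarrow> inv_monomial n d m' \<longrightarrow>
        mono_val n m a b * mono_val n m' a' b' = mono_val n m a' b' * mono_val n m' a b)"

(* Schubert variety X(w) for w = (n/2, n): V meets E_{n/2} = span{e_1..e_{n/2}} nontrivially *)
definition in_X_wmin :: "nat \<Rightarrow> (nat \<Rightarrow> complex) \<Rightarrow> (nat \<Rightarrow> complex) \<Rightarrow> bool" where
  "in_X_wmin n a b \<longleftrightarrow>
     (\<exists>s t. (s, t) \<noteq> (0, 0) \<and> (\<forall>k. n div 2 < k \<longrightarrow> s * a k + t * b k = 0))"

definition minrep_half :: "nat \<Rightarrow> (nat \<Rightarrow> nat) \<Rightarrow> bool" where
  "minrep_half n u \<longleftrightarrow> u permutes {1..n} \<and>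
     strict_mono_on {1..n div 2} u \<and> strict_mono_on {n div 2 + 1..n} u"

definition w0_half :: "nat \<Rightarrow> nat \<Rightarrow> nat" where
  "w0_half n i = (if 1 \<le> i \<and> i \<le> n div 2 then i + n div 2
                  else if n div 2 < i \<and> i \<le> n then i - n div 2 else i)"

(* permutation matrix action e_i \<mapsto> e_{u i} on vectors *)
definition perm_vec :: "(nat \<Rightarrow> nat) \<Rightarrow> (nat \<Rightarrow> complex) \<Rightarrow> nat \<Rightarrow> complex" where
  "perm_vec u a = (\<lambda>k. a (inv u k))"

end

theory Submission
  imports Defs
begin

(* Since xi meets span(e_1, ..., e_{n/2}), its Pluecker
   coordinates p_ij vanish for i, j > n/2. A nonvanishing invariant monomial therefore has no
   factor inside the upper half, and counting degrees shows it has none inside the lower half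
   either; with a Pluecker relation this gives p_ij(xi) <> 0 whenever i <= n/2 < j.
   A fixed-point-free involution g of {1..n} gives the degree-one invariant prod p_{x, g x}.
   If v is neither u nor u w0, then some lower index k and (applying this to u w0) some upper
   index h are sent by u into v(upper half). For an involution sigma exchanging the halves with
   sigma k = h, the invariant of u sigma u^-1 is nonzero at u xi and zero at v xi, while that of
   v w0 v^-1 is nonzero at v xi; so phi(u xi) <> phi(v xi). *)

lemma pl_swap: "pl a b j i = - pl a b i j"
  by (simp add: pl_def)

lemma pl_perm_vec:
  assumes "bij p"
  shows "pl (perm_vec p a) (perm_vec p b) (p i) (p j) = pl a b i j"
  using assms by (simp add: pl_def perm_vec_def bij_is_inj)

lemma pl_pluecker_relation:
  "pl a b i j * pl a b k l - pl a b i l * pl a b k j = pl a b i k * pl a b j l"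
  unfolding pl_def by algebra

lemma mono_val_eq_0_iff:
  "mono_val n m a b = 0 \<longleftrightarrow> (\<exists>i\<in>{1..n}. \<exists>j\<in>{1..n}. m i j \<noteq> 0 \<and> pl a b i j = 0)"
  unfolding mono_val_def by (auto simp: prod_zero_iff)

definition fixfree_involution_on :: "'a set \<Rightarrow> ('a \<Rightarrow> 'a) \<Rightarrow> bool" where
  "fixfree_involution_on S g \<longleftrightarrow> (\<forall>x\<in>S. g x \<in> S \<and> g (g x) = x \<and> g x \<noteq> x)"

lemma fixfree_involution_on_conj:
  assumes p: "p permutes S" and g: "fixfree_involution_on S g"
  shows "fixfree_involution_on S (p \<circ> g \<circ> inv p)"
  unfolding fixfree_involution_on_def
proof
  fix x assume "x \<in> S"
  then have "inv p x \<in> S" using permutes_in_image[OF permutes_inv[OF p]] by simp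
  then have "g (inv p x) \<in> S" "g (g (inv p x)) = inv p x" "g (inv p x) \<noteq> inv p x"
    using g unfolding fixfree_involution_on_def by auto
  then show "(p \<circ> g \<circ> inv p) x \<in> S \<and> (p \<circ> g \<circ> inv p) ((p \<circ> g \<circ> inv p) x) = x \<and>
      (p \<circ> g \<circ> inv p) x \<noteq> x"
    using permutes_in_image[OF p] permutes_inverses[OF p] by (metis comp_apply)
qed

definition matching_monomial :: "nat \<Rightarrow> (nat \<Rightarrow> nat) \<Rightarrow> nat \<Rightarrow> nat \<Rightarrow> nat" where
  "matching_monomial n g i j = (if i \<in> {1..n} \<and> i < j \<and> g i = j then 1 else 0)"

lemma inv_monomial_matching_monomial:
  assumes g: "fixfree_involution_on {1..n} g"
  shows "inv_monomial n 1 (matching_monomial n g)"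
  unfolding inv_monomial_def
proof (intro conjI ballI)
  show "\<forall>i j. matching_monomial n g i j \<noteq> 0 \<longrightarrow> 1 \<le> i \<and> i < j \<and> j \<le> n"
  proof (intro allI impI)
    fix i j assume "matching_monomial n g i j \<noteq> 0"
    then have "i \<in> {1..n}" "i < j" "g i = j"
      by (auto simp: matching_monomial_def split: if_splits)
    then show "1 \<le> i \<and> i < j \<and> j \<le> n" using g unfolding fixfree_involution_on_def by force
  qed
next
  fix i assume i: "i \<in> {1..n}"
  have "matching_monomial n g i j + matching_monomial n g j i = (if j = g i then 1 else 0)"
    if "j \<in> {1..n}" for j
  proof -
    have "g i \<in> {1..n}" "g i \<noteq> i" "j = g i \<longleftrightarrow> g j = i"
      using g i that unfolding fixfree_involution_on_def by auto
    then show ?thesis using i unfolding matching_monomial_def by auto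
  qed
  then have "(\<Sum>j\<in>{1..n}. matching_monomial n g i j + matching_monomial n g j i)
      = (\<Sum>j\<in>{1..n}. if j = g i then 1 else 0)"
    by (rule sum.cong[OF refl])
  also have "\<dots> = 1" using g i unfolding fixfree_involution_on_def by simp
  finally show "(\<Sum>j\<in>{1..n}. matching_monomial n g i j + matching_monomial n g j i) = 1" .
qed

lemma mono_val_matching_monomial_eq_0_iff:
  assumes g: "fixfree_involution_on {1..n} g"
  shows "mono_val n (matching_monomial n g) a b = 0 \<longleftrightarrow> (\<exists>x\<in>{1..n}. pl a b x (g x) = 0)"
proof
  assume "mono_val n (matching_monomial n g) a b = 0"
  then show "\<exists>x\<in>{1..n}. pl a b x (g x) = 0"
    unfolding mono_val_eq_0_iff matching_monomial_def by (auto split: if_splits)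
next
  assume "\<exists>x\<in>{1..n}. pl a b x (g x) = 0"
  then obtain x where x: "x \<in> {1..n}" "pl a b x (g x) = 0" by blast
  have gx: "g x \<in> {1..n}" "g (g x) = x" "g x \<noteq> x"
    using g x(1) unfolding fixfree_involution_on_def by auto
  show "mono_val n (matching_monomial n g) a b = 0"
    unfolding mono_val_eq_0_iff
  proof (cases "x < g x")
    case True
    then show "\<exists>i\<in>{1..n}. \<exists>j\<in>{1..n}. matching_monomial n g i j \<noteq> 0 \<and> pl a b i j = 0"
      using x gx by (intro bexI[of _ x] bexI[of _ "g x"]) (auto simp: matching_monomial_def)
  next
    case False
    then show "\<exists>i\<in>{1..n}. \<exists>j\<in>{1..n}. matching_monomial n g i j \<noteq> 0 \<and> pl a b i j = 0"
      using x gx pl_swap[of a b x "g x"]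
      by (intro bexI[of _ "g x"] bexI[of _ x]) (auto simp: matching_monomial_def)
  qed
qed

lemma pl_eq_0_if_in_X_wmin:
  assumes "in_X_wmin n a b" "n div 2 < i" "n div 2 < j"
  shows "pl a b i j = 0"
proof -
  obtain s t where st: "(s, t) \<noteq> (0, 0)" "\<And>k. n div 2 < k \<Longrightarrow> s * a k + t * b k = 0"
    using assms(1) unfolding in_X_wmin_def by blast
  have "s * pl a b i j = 0" "t * pl a b i j = 0"
    using st(2)[OF assms(2)] st(2)[OF assms(3)] unfolding pl_def by algebra+
  then show ?thesis using st(1) by auto
qed

(* Both halves have total degree (n/2) d, and the upper half is joined only to the lower one. *)
lemma inv_monomial_lower_half_eq_0:
  assumes "even n" and m: "inv_monomial n d m"
    and upper: "\<And>i j. n div 2 < i \<Longrightarrow> m i j = 0"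
    and "i \<le> n div 2" "j \<le> n div 2"
  shows "m i j = 0"
proof -
  define L H where "L = {1..n div 2}" and "H = {n div 2 + 1..n}"
  have N: "{1..n} = L \<union> H" "L \<inter> H = {}" "card L = n div 2" "card H = n div 2"
    using \<open>even n\<close> unfolding L_def H_def by auto
  have deg: "(\<Sum>i\<in>S. \<Sum>j\<in>L \<union> H. m i j + m j i) = card S * d" if "S \<subseteq> {1..n}" for S
    using m that unfolding inv_monomial_def N(1)[symmetric] by (simp add: subset_iff)
  have "(\<Sum>i\<in>H. \<Sum>j\<in>L \<union> H. m i j + m j i) = (\<Sum>i\<in>H. \<Sum>j\<in>L. m j i)"
  proof (rule sum.cong[OF refl])
    fix i assume "i \<in> H"
    then have "m i j = 0" "j \<in> H \<Longrightarrow> m j i = 0" for j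
      using upper unfolding H_def by auto
    then show "(\<Sum>j\<in>L \<union> H. m i j + m j i) = (\<Sum>j\<in>L. m j i)"
      using N(2) unfolding L_def H_def by (simp add: sum.union_disjoint)
  qed
  also have "\<dots> = (\<Sum>i\<in>L. \<Sum>j\<in>H. m i j)"
    by (rule sum.swap)
  also have "(\<Sum>i\<in>L. \<Sum>j\<in>L. m i j) + \<dots> \<le> (\<Sum>i\<in>L. \<Sum>j\<in>L \<union> H. m i j + m j i)"
  proof -
    have "(\<Sum>i\<in>L. \<Sum>j\<in>L. m i j) + (\<Sum>i\<in>L. \<Sum>j\<in>H. m i j) = (\<Sum>i\<in>L. \<Sum>j\<in>L \<union> H. m i j)"
      using N(2) unfolding L_def H_def by (simp add: sum.union_disjoint sum.distrib)
    also have "\<dots> \<le> (\<Sum>i\<in>L. \<Sum>j\<in>L \<union> H. m i j + m j i)"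
      by (intro sum_mono) auto
    finally show ?thesis .
  qed
  finally have "(\<Sum>i\<in>L. \<Sum>j\<in>L. m i j) = 0"
    using deg[of L] deg[of H] N by simp
  moreover have "m i j = 0" if "i = 0 \<or> j = 0"
    using m that unfolding inv_monomial_def by auto
  ultimately show ?thesis
    using assms(4,5) unfolding L_def by (cases "i = 0 \<or> j = 0") auto
qed

lemma inv_monomial_ex_factor:
  assumes "inv_monomial n d m" "0 < d" "i \<in> {1..n}"
  obtains j where "j \<in> {1..n}" "m i j \<noteq> 0 \<or> m j i \<noteq> 0"
proof -
  have "(\<Sum>j\<in>{1..n}. m i j + m j i) \<noteq> 0"
    using assms unfolding inv_monomial_def by simp
  then obtain j where "j \<in> {1..n}" "m i j + m j i \<noteq> 0"
    by (rule sum.not_neutral_contains_not_neutral)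
  then show ?thesis using that by simp
qed

(* k has a neighbour j > n/2 and h a neighbour i <= n/2 in a nonvanishing invariant monomial;
   as p_hj = 0, the Pluecker relation reads p_kh p_ij = p_kj p_ih. *)
lemma pl_ne_0_if_semistable:
  assumes "even n" and ss: "semistable n a b" and X: "in_X_wmin n a b"
    and k: "k \<in> {1..n div 2}" and h: "h \<in> {n div 2 + 1..n}"
  shows "pl a b k h \<noteq> 0"
proof -
  obtain d m where "0 < d" and m: "inv_monomial n d m" and nz: "mono_val n m a b \<noteq> 0"
    using ss unfolding semistable_def by blast
  have support: "i \<in> {1..n} \<and> j \<in> {1..n} \<and> i < j" if "m i j \<noteq> 0" for i j
  proof -
    have "1 \<le> i \<and> i < j \<and> j \<le> n" using m that unfolding inv_monomial_def by blast
    then show ?thesis by simp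
  qed
  have factor: "pl a b i j \<noteq> 0" if "m i j \<noteq> 0" for i j
    using support[OF that] that nz unfolding mono_val_eq_0_iff by blast
  have upper: "m i j = 0" if "n div 2 < i" for i j
  proof (rule ccontr)
    assume "m i j \<noteq> 0"
    then show False
      using that factor[of i j] support[of i j] pl_eq_0_if_in_X_wmin[OF X, of i j] by simp
  qed
  have lower: "m i j = 0" if "i \<le> n div 2" "j \<le> n div 2" for i j
    using inv_monomial_lower_half_eq_0[OF \<open>even n\<close> m upper that] .
  have "k \<in> {1..n}" using k by auto
  then obtain j where j: "j \<in> {1..n}" "m k j \<noteq> 0 \<or> m j k \<noteq> 0"
    by (rule inv_monomial_ex_factor[OF m \<open>0 < d\<close>])
  have "n div 2 < j"
  proof (rule ccontr)
    assume "\<not> n div 2 < j"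
    then show False using j(2) k lower[of k j] lower[of j k] by simp
  qed
  then have kj: "pl a b k j \<noteq> 0" using j(2) upper[of j k] factor[of k j] by auto
  have "h \<in> {1..n}" using h by simp
  then obtain i where i: "i \<in> {1..n}" "m h i \<noteq> 0 \<or> m i h \<noteq> 0"
    by (rule inv_monomial_ex_factor[OF m \<open>0 < d\<close>])
  moreover have "n div 2 < h" using h by simp
  ultimately have ih: "pl a b i h \<noteq> 0" using upper[of h i] factor[of i h] by auto
  have "pl a b h j = 0" using pl_eq_0_if_in_X_wmin[OF X] h \<open>n div 2 < j\<close> by auto
  then have "pl a b k h * pl a b i j = pl a b k j * pl a b i h"
    using pl_pluecker_relation[of a b k h i j] by simp
  then show ?thesis using kj ih by auto
qed

definition swaps_halves :: "nat \<Rightarrow> (nat \<Rightarrow> nat) \<Rightarrow> bool" where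
  "swaps_halves n g \<longleftrightarrow>
     (\<forall>x\<in>{1..n}. g x \<in> {1..n} \<and> g (g x) = x \<and> (x \<le> n div 2 \<longleftrightarrow> n div 2 < g x))"

lemma fixfree_involution_on_if_swaps_halves:
  "swaps_halves n g \<Longrightarrow> fixfree_involution_on {1..n} g"
  unfolding swaps_halves_def fixfree_involution_on_def by fastforce

lemma swaps_halves_w0_half:
  assumes "even n"
  shows "swaps_halves n (w0_half n)"
proof -
  obtain m where "n = 2 * m" using assms by blast
  then show ?thesis unfolding swaps_halves_def w0_half_def by auto
qed

(* Conjugate w0 by the transposition of h and w0 k, which preserves both halves. *)
lemma ex_swaps_halves_through:
  assumes "even n" and k: "k \<in> {1..n div 2}" and h: "h \<in> {n div 2 + 1..n}"
  obtains \<sigma> where "swaps_halves n \<sigma>" "\<sigma> k = h"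
proof
  define W where "W = w0_half n"
  define \<tau> where "\<tau> = transpose h (W k)"
  have W: "swaps_halves n W" unfolding W_def using swaps_halves_w0_half[OF \<open>even n\<close>] .
  have "k \<in> {1..n}" using k by auto
  then have Wk: "W k \<in> {n div 2 + 1..n}" using W k unfolding swaps_halves_def by auto
  have \<tau>: "\<tau> x \<in> {1..n} \<and> (\<tau> x \<le> n div 2 \<longleftrightarrow> x \<le> n div 2)" if "x \<in> {1..n}" for x
    using that h Wk unfolding \<tau>_def transpose_def by auto
  have \<tau>\<tau>: "\<tau> (\<tau> x) = x" for x unfolding \<tau>_def by simp
  show "swaps_halves n (\<tau> \<circ> W \<circ> \<tau>)"
    unfolding swaps_halves_def
  proof
    fix x assume x: "x \<in> {1..n}"
    have "\<tau> x \<in> {1..n}" "\<tau> x \<le> n div 2 \<longleftrightarrow> x \<le> n div 2" using \<tau>[OF x] by auto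
    moreover from this(1) have "W (\<tau> x) \<in> {1..n}" "W (W (\<tau> x)) = \<tau> x"
      "\<tau> x \<le> n div 2 \<longleftrightarrow> n div 2 < W (\<tau> x)"
      using W unfolding swaps_halves_def by auto
    moreover from this(1) have "\<tau> (W (\<tau> x)) \<in> {1..n}"
      "\<tau> (W (\<tau> x)) \<le> n div 2 \<longleftrightarrow> W (\<tau> x) \<le> n div 2"
      using \<tau> by auto
    ultimately show "(\<tau> \<circ> W \<circ> \<tau>) x \<in> {1..n} \<and> (\<tau> \<circ> W \<circ> \<tau>) ((\<tau> \<circ> W \<circ> \<tau>) x) = x \<and>
        (x \<le> n div 2 \<longleftrightarrow> n div 2 < (\<tau> \<circ> W \<circ> \<tau>) x)"
      using \<tau>\<tau> by auto
  qed
  have "\<tau> k = k" using k h Wk unfolding \<tau>_def by auto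
  then show "(\<tau> \<circ> W \<circ> \<tau>) k = h" unfolding \<tau>_def by simp
qed

lemma pl_perm_vec_ne_0_if_swaps_halves:
  assumes "even n" "semistable n a b" "in_X_wmin n a b" and \<sigma>: "swaps_halves n \<sigma>"
    and p: "p permutes {1..n}" and x: "x \<in> {1..n}"
  shows "pl (perm_vec p a) (perm_vec p b) (p x) (p (\<sigma> x)) \<noteq> 0"
proof -
  have "\<sigma> x \<in> {1..n}" "x \<le> n div 2 \<longleftrightarrow> n div 2 < \<sigma> x"
    using \<sigma> x unfolding swaps_halves_def by auto
  then have "pl a b x (\<sigma> x) \<noteq> 0"
    using pl_ne_0_if_semistable[OF assms(1-3), of x "\<sigma> x"]
      pl_ne_0_if_semistable[OF assms(1-3), of "\<sigma> x" x] pl_swap[of a b x "\<sigma> x"] x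
    by (cases "x \<le> n div 2") auto
  then show ?thesis using pl_perm_vec[OF permutes_bij[OF p]] by simp
qed

lemma mono_val_matching_monomial_ne_0:
  assumes "even n" "semistable n a b" "in_X_wmin n a b" and \<sigma>: "swaps_halves n \<sigma>"
    and p: "p permutes {1..n}"
  shows "mono_val n (matching_monomial n (p \<circ> \<sigma> \<circ> inv p)) (perm_vec p a) (perm_vec p b) \<noteq> 0"
proof -
  have "pl (perm_vec p a) (perm_vec p b) x ((p \<circ> \<sigma> \<circ> inv p) x) \<noteq> 0" if "x \<in> {1..n}" for x
  proof -
    have "inv p x \<in> {1..n}" using permutes_in_image[OF permutes_inv[OF p]] that by simp
    then show ?thesis
      using pl_perm_vec_ne_0_if_swaps_halves[OF assms] permutes_inverses(1)[OF p, of x] by force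
  qed
  then show ?thesis
    using mono_val_matching_monomial_eq_0_iff[OF fixfree_involution_on_conj[OF p
          fixfree_involution_on_if_swaps_halves[OF \<sigma>]]] by blast
qed

lemma strict_mono_on_eq_if_image_eq:
  fixes f g :: "'a::wellorder \<Rightarrow> 'b::linorder"
  assumes f: "strict_mono_on I f" and g: "strict_mono_on I g" and eq: "f ` I = g ` I"
  shows "x \<in> I \<Longrightarrow> f x = g x"
proof (induction x rule: less_induct)
  case (less x)
  have not_less: "\<not> f' x < g' x"
    if f': "strict_mono_on I f'" and g': "strict_mono_on I g'" and "f' ` I = g' ` I"
      and IH: "\<And>y. y \<in> I \<Longrightarrow> y < x \<Longrightarrow> f' y = g' y" for f' g' :: "'a \<Rightarrow> 'b"
  proof
    assume lt: "f' x < g' x"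
    obtain y where y: "y \<in> I" "f' x = g' y" using \<open>f' ` I = g' ` I\<close> less.prems by blast
    have "\<not> g' x \<le> g' y" using lt y(2) by simp
    then have "y < x" using strict_mono_on_less_eq[OF g' less.prems y(1)] by simp
    then show False
      using y IH less.prems strict_mono_onD[OF f'] by (metis order.irrefl)
  qed
  show ?case
    using not_less[OF f g eq] not_less[OF g f eq[symmetric]] less.IH less.prems
    by (metis linorder_neqE)
qed

lemma minrep_half_eqI:
  assumes u: "minrep_half n u" and v: "minrep_half n v"
    and sub: "u ` {1..n div 2} \<subseteq> v ` {1..n div 2}"
  shows "v = u"
proof -
  define L H where "L = {1..n div 2}" and "H = {n div 2 + 1..n}"
  have N: "{1..n} = L \<union> H" and "H = (L \<union> H) - L" unfolding L_def H_def by auto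
  have pu: "u permutes L \<union> H" and pv: "v permutes L \<union> H"
    using u v N unfolding minrep_half_def by auto
  have "card (u ` L) = card (v ` L)"
    using permutes_inj[OF pu] permutes_inj[OF pv] by (simp add: card_image inj_on_subset)
  then have eqL: "u ` L = v ` L"
    using sub unfolding L_def by (intro card_subset_eq) auto
  have eqH: "u ` H = v ` H"
    using eqL permutes_image[OF pu] permutes_image[OF pv] \<open>H = (L \<union> H) - L\<close>
      image_set_diff[OF permutes_inj[OF pu]] image_set_diff[OF permutes_inj[OF pv]] by metis
  show "v = u"
  proof
    fix x
    consider "x \<in> L" | "x \<in> H" | "x \<notin> L \<union> H" by blast
    then show "v x = u x"
    proof cases
      case 1
      then show ?thesis
        using strict_mono_on_eq_if_image_eq[OF _ _ eqL] u v unfolding minrep_half_def L_def by metis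
    next
      case 2
      then show ?thesis
        using strict_mono_on_eq_if_image_eq[OF _ _ eqH] u v unfolding minrep_half_def H_def by metis
    next
      case 3
      then show ?thesis using permutes_not_in[OF pu] permutes_not_in[OF pv] by simp
    qed
  qed
qed

lemma w0_half_permutes:
  assumes "even n"
  shows "w0_half n permutes {1..n}"
proof -
  obtain m where m: "n = 2 * m" using assms by blast
  have "w0_half n (w0_half n x) = x" for x
    unfolding w0_half_def m by auto
  then have "bij (w0_half n)" by (rule involuntory_imp_bij)
  moreover have "w0_half n x = x" if "x \<notin> {1..n}" for x
    using that unfolding w0_half_def by auto
  ultimately show ?thesis by (simp add: permutes_def bij_iff)
qed

lemma minrep_half_comp_w0_half:
  assumes "even n" and u: "minrep_half n u"
  shows "minrep_half n (u \<circ> w0_half n)"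
proof -
  obtain m where m: "n = 2 * m" using assms by blast
  have lo: "strict_mono_on {1..m} u" and hi: "strict_mono_on {m + 1..n} u"
    using u unfolding minrep_half_def m by auto
  have "strict_mono_on {1..m} (u \<circ> w0_half n)"
  proof (rule strict_mono_onI)
    fix r s assume "r \<in> {1..m}" "s \<in> {1..m}" "r < s"
    then have "u (r + m) < u (s + m)" using strict_mono_onD[OF hi] m by auto
    then show "(u \<circ> w0_half n) r < (u \<circ> w0_half n) s"
      using \<open>r \<in> {1..m}\<close> \<open>s \<in> {1..m}\<close> unfolding w0_half_def m by auto
  qed
  moreover have "strict_mono_on {m + 1..n} (u \<circ> w0_half n)"
  proof (rule strict_mono_onI)
    fix r s assume "r \<in> {m + 1..n}" "s \<in> {m + 1..n}" "r < s"
    then have "u (r - m) < u (s - m)" using strict_mono_onD[OF lo] m by auto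
    then show "(u \<circ> w0_half n) r < (u \<circ> w0_half n) s"
      using \<open>r \<in> {m + 1..n}\<close> \<open>s \<in> {m + 1..n}\<close> unfolding w0_half_def m by auto
  qed
  ultimately show ?thesis
    using u permutes_compose[OF w0_half_permutes[OF \<open>even n\<close>]] unfolding minrep_half_def m
    by simp
qed

lemma minrep_half_ex_crossing:
  assumes u: "minrep_half n u" and v: "minrep_half n v" and "v \<noteq> u"
  obtains x y where "x \<in> {1..n div 2}" "y \<in> {n div 2 + 1..n}" "u x = v y"
proof -
  obtain x where x: "x \<in> {1..n div 2}" "u x \<notin> v ` {1..n div 2}"
    using minrep_half_eqI[OF u v] \<open>v \<noteq> u\<close> by blast
  have pu: "u permutes {1..n}" and pv: "v permutes {1..n}"
    using u v unfolding minrep_half_def by auto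
  have "u x \<in> v ` {1..n}"
    using x(1) permutes_in_image[OF pu] permutes_image[OF pv] by auto
  then obtain y where "y \<in> {1..n}" "u x = v y" by blast
  moreover have "y \<notin> {1..n div 2}" using x(2) \<open>u x = v y\<close> by auto
  ultimately have "y \<in> {n div 2 + 1..n}" by auto
  then show ?thesis using that[OF x(1)] \<open>u x = v y\<close> by blast
qed

lemma not_same_quot_if_crossing:
  assumes "even n" "semistable n a b" and X: "in_X_wmin n a b"
    and pu: "u permutes {1..n}" and pv: "v permutes {1..n}" and \<sigma>: "swaps_halves n \<sigma>"
    and y: "y \<in> {n div 2 + 1..n}" and z: "z \<in> {n div 2 + 1..n}"
    and "k \<in> {1..n}" "u k = v y" "u (\<sigma> k) = v z"
  shows "\<not> same_quot n (perm_vec u a) (perm_vec u b) (perm_vec v a) (perm_vec v b)"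
proof
  assume quot: "same_quot n (perm_vec u a) (perm_vec u b) (perm_vec v a) (perm_vec v b)"
  define gu gv where "gu = u \<circ> \<sigma> \<circ> inv u" and "gv = v \<circ> w0_half n \<circ> inv v"
  have W: "swaps_halves n (w0_half n)" using swaps_halves_w0_half[OF \<open>even n\<close>] .
  have gu: "fixfree_involution_on {1..n} gu" and gv: "fixfree_involution_on {1..n} gv"
    unfolding gu_def gv_def
    using fixfree_involution_on_conj pu pv fixfree_involution_on_if_swaps_halves \<sigma> W by blast+
  have "gu (u k) = v z"
    unfolding gu_def using \<open>u (\<sigma> k) = v z\<close> permutes_inverses(2)[OF pu] by simp
  then have "pl (perm_vec v a) (perm_vec v b) (u k) (gu (u k)) = 0"
    using \<open>u k = v y\<close> pl_perm_vec[OF permutes_bij[OF pv]] pl_eq_0_if_in_X_wmin[OF X] y z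
    by auto
  then have "mono_val n (matching_monomial n gu) (perm_vec v a) (perm_vec v b) = 0"
    using mono_val_matching_monomial_eq_0_iff[OF gu] permutes_in_image[OF pu] \<open>k \<in> {1..n}\<close>
    by auto
  moreover have "mono_val n (matching_monomial n gu) (perm_vec u a) (perm_vec u b) \<noteq> 0"
    unfolding gu_def using mono_val_matching_monomial_ne_0[OF assms(1-3) \<sigma> pu] .
  moreover have "mono_val n (matching_monomial n gv) (perm_vec v a) (perm_vec v b) \<noteq> 0"
    unfolding gv_def using mono_val_matching_monomial_ne_0[OF assms(1-3) W pv] .
  moreover have
    "mono_val n (matching_monomial n gu) (perm_vec u a) (perm_vec u b) *
       mono_val n (matching_monomial n gv) (perm_vec v a) (perm_vec v b) =
     mono_val n (matching_monomial n gu) (perm_vec v a) (perm_vec v b) *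
       mono_val n (matching_monomial n gv) (perm_vec u a) (perm_vec u b)"
    using quot inv_monomial_matching_monomial[OF gu] inv_monomial_matching_monomial[OF gv]
    unfolding same_quot_def by blast
  ultimately show False by simp
qed

theorem lemma7p9:
  fixes n :: nat and a b :: "nat \<Rightarrow> complex" and u v :: "nat \<Rightarrow> nat"
  assumes "even n"
    and "semistable n a b" and "in_X_wmin n a b"
    and "minrep_half n u" and "minrep_half n v"
    and "same_quot n (perm_vec u a) (perm_vec u b) (perm_vec v a) (perm_vec v b)"
  shows "v = u \<or> v = u \<circ> w0_half n"
proof (rule ccontr)
  assume "\<not> (v = u \<or> v = u \<circ> w0_half n)"
  then have "v \<noteq> u" "v \<noteq> u \<circ> w0_half n" by auto
  note u = assms(4) and v = assms(5)
  obtain k y where k: "k \<in> {1..n div 2}" and y: "y \<in> {n div 2 + 1..n}" and "u k = v y"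
    using minrep_half_ex_crossing[OF u v \<open>v \<noteq> u\<close>] .
  obtain k' z where k': "k' \<in> {1..n div 2}" and z: "z \<in> {n div 2 + 1..n}"
    and "u (w0_half n k') = v z"
    using minrep_half_ex_crossing[OF minrep_half_comp_w0_half[OF \<open>even n\<close> u] v
        \<open>v \<noteq> u \<circ> w0_half n\<close>] by auto
  moreover have "w0_half n k' \<in> {n div 2 + 1..n}"
    using k' unfolding w0_half_def by auto
  then obtain \<sigma> where \<sigma>: "swaps_halves n \<sigma>" and "\<sigma> k = w0_half n k'"
    by (rule ex_swaps_halves_through[OF \<open>even n\<close> k])
  ultimately have "u (\<sigma> k) = v z" by simp
  moreover have "u permutes {1..n}" "v permutes {1..n}" "k \<in> {1..n}"
    using u v k unfolding minrep_half_def by auto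
  ultimately show False
    using not_same_quot_if_crossing[OF assms(1-3) _ _ \<sigma> y z] \<open>u k = v y\<close> assms(6) by blast
qed

end
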